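(* Every abelian group possessing a subgroup of finite index which is of profinite type is itself of profinite type.
   Context: An abstract group is of profinite type if it admits a topology making it a profinite group (compact, Hausdorff, totally disconnected topological group). *)

theory Defs
  imports "HOL-Analysis.Analysis" "HOL-Algebra.Algebra"
begin

definition topological_group :: "('a, 'b) monoid_scheme \<Rightarrow> 'a topology \<Rightarrow> bool" where
  "topological_group G T \<longleftrightarrow>
     group G \<and> topspace T = carrier G \<and>
     continuous_map (prod_topology T T) T (\<lambda>(x, y). x \<otimes>\<^bsub>G\<^esub> y) \<and>
     continuous_map T T (\<lambda>x. inv\<^bsub>G\<^esub> x)"

definition totally_disconnected_space :: "'a topology \<Rightarrow> bool" where
  "totally_disconnected_space T \<longleftrightarrow> (\<forall>S. connectedin T S \<longrightarrow> (\<exists>a. S \<subseteq> {a}))"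

definition profinite_type :: "('a, 'b) monoid_scheme \<Rightarrow> bool" where
  "profinite_type G \<longleftrightarrow>
     (\<exists>T. topological_group G T \<and> compact_space T \<and> Hausdorff_space T \<and>
          totally_disconnected_space T)"

end

theory Submission
  imports Defs
begin

text \<open>Declaring a set \<open>U \<subseteq> G\<close> open when each of its translates meets \<open>H\<close> in a \<open>T\<close>-open set
  gives a group topology on \<open>G\<close> in which \<open>H\<close> is an open (hence also closed) subgroup carrying
  \<open>T\<close>. Then \<open>G\<close> is the union of finitely many translates of the compact set \<open>H\<close>, points are
  separated by translating the separation in \<open>H\<close> or by the clopen set \<open>H\<close>, and a connected
  set through \<open>\<one>\<close> cannot leave the clopen set \<open>H\<close>, so it is a point.\<close>

locale subgroup_topology_extension = comm_group G for G (structure) +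
  fixes H :: "'a set" and T :: "'a topology"
  assumes subgroup_H: "subgroup H G"
    and topological_group_H: "topological_group (G\<lparr>carrier := H\<rparr>) T"
begin

definition extended_open :: "'a set \<Rightarrow> bool" where
  "extended_open U \<longleftrightarrow>
     U \<subseteq> carrier G \<and> (\<forall>g\<in>carrier G. openin T {h\<in>H. g \<otimes> h \<in> U})"

definition extended_topology :: "'a topology" where
  "extended_topology = topology extended_open"

lemma subgroup_subset: "H \<subseteq> carrier G"
  using subgroup_H subgroup.subset by blast

lemma one_in_H: "\<one> \<in> H"
  using subgroup_H subgroup.one_closed by blast

lemma topspace_T: "topspace T = H"
  using topological_group_H unfolding topological_group_def by simp

lemma continuous_map_mult_T: "continuous_map (prod_topology T T) T (\<lambda>(x, y). x \<otimes> y)"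
  using topological_group_H unfolding topological_group_def by simp

lemma continuous_map_inv_T: "continuous_map T T (\<lambda>x. inv x)"
proof -
  have "continuous_map T T (\<lambda>x. inv\<^bsub>G\<lparr>carrier := H\<rparr>\<^esub> x)"
    using topological_group_H unfolding topological_group_def by simp
  then show ?thesis
    by (rule continuous_map_eq) (simp add: topspace_T subgroup_H)
qed

lemma mult_in_H_iff:
  assumes "g \<in> carrier G" "h \<in> H"
  shows "g \<otimes> h \<in> H \<longleftrightarrow> g \<in> H"
proof
  assume "g \<otimes> h \<in> H"
  then have "(g \<otimes> h) \<otimes> inv h \<in> H"
    using subgroup_H assms by (simp add: subgroup.m_closed subgroup.m_inv_closed)
  then show "g \<in> H"
    using assms subgroup_subset by (simp add: m_assoc subsetD)
qed (use subgroup_H assms in \<open>simp add: subgroup.m_closed\<close>)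

lemma istopology_extended_open: "istopology extended_open"
  unfolding istopology_def
proof (intro conjI allI impI ballI)
  fix U V assume "extended_open U" "extended_open V"
  moreover have "{h\<in>H. g \<otimes> h \<in> U \<inter> V} = {h\<in>H. g \<otimes> h \<in> U} \<inter> {h\<in>H. g \<otimes> h \<in> V}" for g
    by blast
  ultimately show "extended_open (U \<inter> V)"
    unfolding extended_open_def by auto
next
  fix \<U> assume \<U>: "\<forall>U\<in>\<U>. extended_open U"
  have "{h\<in>H. g \<otimes> h \<in> \<Union>\<U>} = (\<Union>U\<in>\<U>. {h\<in>H. g \<otimes> h \<in> U})" for g
    by blast
  with \<U> show "extended_open (\<Union>\<U>)"
    unfolding extended_open_def by (auto intro!: openin_Union)
qed

lemma openin_extended_topology: "openin extended_topology U \<longleftrightarrow> extended_open U"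
  unfolding extended_topology_def using istopology_extended_open by simp

lemma topspace_extended_topology: "topspace extended_topology = carrier G"
proof -
  have "{h\<in>H. g \<otimes> h \<in> carrier G} = topspace T" if "g \<in> carrier G" for g
    using that subgroup_subset topspace_T by auto
  then have "openin extended_topology (carrier G)"
    by (simp add: openin_extended_topology extended_open_def)
  moreover have "openin extended_topology U \<Longrightarrow> U \<subseteq> carrier G" for U
    by (simp add: openin_extended_topology extended_open_def)
  ultimately show ?thesis
    by (metis openin_subset openin_topspace subset_antisym)
qed

lemma continuous_map_translation_T:
  assumes "g \<in> H"
  shows "continuous_map T T (\<lambda>h. g \<otimes> h)"
proof -
  have "continuous_map T (prod_topology T T) (\<lambda>h. (g, h))"
    using assms topspace_T by (intro continuous_map_pairedI) auto
  from continuous_map_compose[OF this continuous_map_mult_T] show ?thesis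
    by (simp add: o_def)
qed

lemma openin_extended_topology_if_openin_T:
  assumes W: "openin T W"
  shows "openin extended_topology W"
  unfolding openin_extended_topology extended_open_def
proof (intro conjI ballI)
  have WH: "W \<subseteq> H"
    using openin_subset[OF W] topspace_T by simp
  then show "W \<subseteq> carrier G"
    using subgroup_subset by blast
  fix g assume g: "g \<in> carrier G"
  show "openin T {h\<in>H. g \<otimes> h \<in> W}"
  proof (cases "g \<in> H")
    case True
    then show ?thesis
      using continuous_map_translation_T W topspace_T by (simp add: continuous_map_def)
  next
    case False
    then have "{h\<in>H. g \<otimes> h \<in> W} = {}"
      using mult_in_H_iff g WH by blast
    then show ?thesis by (metis openin_empty)
  qed
qed

lemma openin_T_translate_traces_of_H:
  assumes "g \<in> carrier G"
  shows "openin T {h\<in>H. g \<otimes> h \<in> H}" "openin T {h\<in>H. g \<otimes> h \<in> carrier G - H}"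
proof -
  have "{h\<in>H. g \<otimes> h \<in> H} = (if g \<in> H then topspace T else {})"
       "{h\<in>H. g \<otimes> h \<in> carrier G - H} = (if g \<in> H then {} else topspace T)"
    using mult_in_H_iff assms topspace_T subgroup_subset by auto
  then show "openin T {h\<in>H. g \<otimes> h \<in> H}" "openin T {h\<in>H. g \<otimes> h \<in> carrier G - H}"
    by simp_all
qed

lemma openin_subgroup: "openin extended_topology H"
  using openin_T_translate_traces_of_H subgroup_subset
  by (simp add: openin_extended_topology extended_open_def)

lemma closedin_subgroup: "closedin extended_topology H"
  using openin_T_translate_traces_of_H subgroup_subset
  by (simp add: closedin_def topspace_extended_topology openin_extended_topology
      extended_open_def)

lemma continuous_map_translation:
  assumes a: "a \<in> carrier G"
  shows "continuous_map extended_topology extended_topology (\<lambda>z. a \<otimes> z)"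
  unfolding continuous_map_def topspace_extended_topology
proof (intro conjI allI impI)
  show "(\<lambda>z. a \<otimes> z) \<in> carrier G \<rightarrow> carrier G"
    using a by auto
  fix U assume "openin extended_topology U"
  then have U: "extended_open U"
    by (simp add: openin_extended_topology)
  have "{h\<in>H. g \<otimes> h \<in> {z \<in> carrier G. a \<otimes> z \<in> U}} = {h\<in>H. (a \<otimes> g) \<otimes> h \<in> U}"
    if "g \<in> carrier G" for g
    using a that subgroup_subset by (auto simp: m_assoc)
  with U a show "openin extended_topology {z \<in> carrier G. a \<otimes> z \<in> U}"
    by (simp add: openin_extended_topology extended_open_def)
qed

lemma openin_translation_image:
  assumes "x \<in> carrier G" "openin T A"
  shows "openin extended_topology ((\<lambda>a. x \<otimes> a) ` A)"
proof -
  have AH: "A \<subseteq> H"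
    using openin_subset[OF assms(2)] topspace_T by simp
  have "(\<lambda>a. x \<otimes> a) ` A = {z \<in> topspace extended_topology. inv x \<otimes> z \<in> A}"
  proof (intro equalityI subsetI)
    fix z assume "z \<in> (\<lambda>a. x \<otimes> a) ` A"
    then show "z \<in> {z \<in> topspace extended_topology. inv x \<otimes> z \<in> A}"
      using assms(1) AH subgroup_subset
      by (auto simp: topspace_extended_topology m_assoc[symmetric])
  next
    fix z assume z: "z \<in> {z \<in> topspace extended_topology. inv x \<otimes> z \<in> A}"
    then have "z = x \<otimes> (inv x \<otimes> z)"
      using assms(1) by (simp add: topspace_extended_topology m_assoc[symmetric])
    with z show "z \<in> (\<lambda>a. x \<otimes> a) ` A"
      by blast
  qed
  also have "openin extended_topology \<dots>"
    using continuous_map_translation[of "inv x"] assms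
      openin_extended_topology_if_openin_T[OF assms(2)]
    by (simp add: continuous_map_def)
  finally show ?thesis .
qed

lemma subtopology_subgroup: "subtopology extended_topology H = T"
proof (rule topology_eq[THEN iffD2], intro allI iffI)
  fix S assume "openin (subtopology extended_topology H) S"
  then obtain U where U: "extended_open U" "S = U \<inter> H"
    by (auto simp: openin_subtopology openin_extended_topology)
  then have "openin T {h\<in>H. \<one> \<otimes> h \<in> U}"
    by (auto simp: extended_open_def)
  moreover have "{h\<in>H. \<one> \<otimes> h \<in> U} = S"
    using U subgroup_subset by auto
  ultimately show "openin T S" by simp
next
  fix S assume S: "openin T S"
  then have "S = S \<inter> H"
    using openin_subset topspace_T by blast
  then show "openin (subtopology extended_topology H) S"
    using openin_extended_topology_if_openin_T[OF S] by (auto simp: openin_subtopology)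
qed

lemma openin_T_trace_at:
  assumes "openin extended_topology U" "x \<in> U"
  shows "openin T {h\<in>H. x \<otimes> h \<in> U}" "\<one> \<in> {h\<in>H. x \<otimes> h \<in> U}"
  using assms one_in_H by (auto simp: openin_extended_topology extended_open_def)

lemma mult_nhds_one_T:
  assumes "openin T V" "\<one> \<in> V"
  obtains A B where "openin T A" "openin T B" "\<one> \<in> A" "\<one> \<in> B"
    "\<And>a b. a \<in> A \<Longrightarrow> b \<in> B \<Longrightarrow> a \<otimes> b \<in> V"
proof -
  define P where "P = {p \<in> topspace (prod_topology T T). (\<lambda>(a, b). a \<otimes> b) p \<in> V}"
  have "openin (prod_topology T T) P"
    using continuous_map_mult_T assms(1) unfolding P_def continuous_map_def by blast
  moreover have "(\<one>, \<one>) \<in> P"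
    using assms(2) one_in_H topspace_T by (simp add: P_def)
  ultimately obtain A B where "openin T A" "openin T B" "\<one> \<in> A" "\<one> \<in> B" "A \<times> B \<subseteq> P"
    unfolding openin_prod_topology_alt by meson
  moreover have "a \<otimes> b \<in> V" if "A \<times> B \<subseteq> P" "a \<in> A" "b \<in> B" for a b
    using that by (auto simp: P_def)
  ultimately show ?thesis
    using that by blast
qed

lemma inv_nhds_one_T:
  assumes "openin T V" "\<one> \<in> V"
  obtains A where "openin T A" "\<one> \<in> A" "\<And>a. a \<in> A \<Longrightarrow> inv a \<in> V"
proof -
  have "openin T {a \<in> topspace T. inv a \<in> V}"
    using continuous_map_inv_T assms(1) unfolding continuous_map_def by blast
  moreover have "\<one> \<in> {a \<in> topspace T. inv a \<in> V}"
    using assms(2) one_in_H topspace_T by simp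
  ultimately show ?thesis
    using that by blast
qed

lemma continuous_map_mult:
  "continuous_map (prod_topology extended_topology extended_topology) extended_topology
     (\<lambda>(x, y). x \<otimes> y)"
  unfolding continuous_map_def topspace_prod_topology topspace_extended_topology
proof (intro conjI allI impI)
  show "(\<lambda>(x, y). x \<otimes> y) \<in> carrier G \<times> carrier G \<rightarrow> carrier G"
    by auto
  fix U assume U: "openin extended_topology U"
  show "openin (prod_topology extended_topology extended_topology)
          {p \<in> carrier G \<times> carrier G. (case p of (x, y) \<Rightarrow> x \<otimes> y) \<in> U}"
    unfolding openin_prod_topology_alt
  proof (intro allI impI)
    fix x y assume "(x, y) \<in> {p \<in> carrier G \<times> carrier G. (case p of (x, y) \<Rightarrow> x \<otimes> y) \<in> U}"
    then have x: "x \<in> carrier G" and y: "y \<in> carrier G" and xyU: "x \<otimes> y \<in> U"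
      by auto
    obtain A B where AB: "openin T A" "openin T B" "\<one> \<in> A" "\<one> \<in> B"
        and ABU: "\<And>a b. a \<in> A \<Longrightarrow> b \<in> B \<Longrightarrow> a \<otimes> b \<in> {h\<in>H. (x \<otimes> y) \<otimes> h \<in> U}"
      using mult_nhds_one_T[OF openin_T_trace_at[OF U xyU]] by blast
    have AH: "A \<subseteq> H" "B \<subseteq> H"
      using AB(1,2) openin_subset topspace_T by blast+
    show "\<exists>U' V'. openin extended_topology U' \<and> openin extended_topology V' \<and>
        x \<in> U' \<and> y \<in> V' \<and>
        U' \<times> V' \<subseteq> {p \<in> carrier G \<times> carrier G. (case p of (x, y) \<Rightarrow> x \<otimes> y) \<in> U}"
    proof (intro exI conjI)
      show "openin extended_topology ((\<lambda>a. x \<otimes> a) ` A)"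
           "openin extended_topology ((\<lambda>b. y \<otimes> b) ` B)"
        using openin_translation_image x y AB by auto
      show "x \<in> (\<lambda>a. x \<otimes> a) ` A" "y \<in> (\<lambda>b. y \<otimes> b) ` B"
        using x y AB by (auto intro!: image_eqI[where x = \<one>])
      show "(\<lambda>a. x \<otimes> a) ` A \<times> (\<lambda>b. y \<otimes> b) ` B
          \<subseteq> {p \<in> carrier G \<times> carrier G. (case p of (x, y) \<Rightarrow> x \<otimes> y) \<in> U}"
      proof (rule subsetI)
        fix p assume "p \<in> (\<lambda>a. x \<otimes> a) ` A \<times> (\<lambda>b. y \<otimes> b) ` B"
        then obtain a b where ab: "a \<in> A" "b \<in> B" and p: "p = (x \<otimes> a, y \<otimes> b)"
          by blast
        then have a: "a \<in> carrier G" and b: "b \<in> carrier G"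
          using AH subgroup_subset by auto
        have "(x \<otimes> a) \<otimes> (y \<otimes> b) = (x \<otimes> y) \<otimes> (a \<otimes> b)"
          using x y a b by (simp add: m_ac)
        with ABU[OF ab] x y a b p
        show "p \<in> {p \<in> carrier G \<times> carrier G. (case p of (x, y) \<Rightarrow> x \<otimes> y) \<in> U}"
          by simp
      qed
    qed
  qed
qed

lemma continuous_map_inv: "continuous_map extended_topology extended_topology (\<lambda>x. inv x)"
  unfolding continuous_map_def topspace_extended_topology
proof (intro conjI allI impI)
  show "(\<lambda>x. inv x) \<in> carrier G \<rightarrow> carrier G"
    by auto
  fix U assume U: "openin extended_topology U"
  show "openin extended_topology {z \<in> carrier G. inv z \<in> U}"
  proof (subst openin_subopen, intro ballI)
    fix x assume "x \<in> {z \<in> carrier G. inv z \<in> U}"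
    then have x: "x \<in> carrier G" and xU: "inv x \<in> U"
      by auto
    obtain A where A: "openin T A" "\<one> \<in> A"
        and AU: "\<And>a. a \<in> A \<Longrightarrow> inv a \<in> {h\<in>H. inv x \<otimes> h \<in> U}"
      using inv_nhds_one_T[OF openin_T_trace_at[OF U xU]] by blast
    have AG: "A \<subseteq> carrier G"
      using A(1) openin_subset topspace_T subgroup_subset by blast
    show "\<exists>W. openin extended_topology W \<and> x \<in> W \<and> W \<subseteq> {z \<in> carrier G. inv z \<in> U}"
    proof (intro exI conjI)
      show "openin extended_topology ((\<lambda>a. x \<otimes> a) ` A)"
        using openin_translation_image[OF x A(1)] .
      show "x \<in> (\<lambda>a. x \<otimes> a) ` A"
        using x A by (auto intro!: image_eqI[where x = \<one>])
      show "(\<lambda>a. x \<otimes> a) ` A \<subseteq> {z \<in> carrier G. inv z \<in> U}"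
      proof clarify
        fix a assume "a \<in> A"
        moreover have "inv (x \<otimes> a) = inv x \<otimes> inv a"
          using x \<open>a \<in> A\<close> AG by (auto simp: inv_mult m_comm)
        ultimately show "x \<otimes> a \<in> carrier G \<and> inv (x \<otimes> a) \<in> U"
          using AU x AG by auto
      qed
    qed
  qed
qed

lemma topological_group_extended: "topological_group G extended_topology"
  unfolding topological_group_def
  using continuous_map_mult continuous_map_inv topspace_extended_topology is_group by simp

lemma compact_space_extended:
  assumes "compact_space T" and "finite (rcosets H)"
  shows "compact_space extended_topology"
proof -
  have compact_H: "compactin extended_topology H"
    using assms(1) subtopology_subgroup compactin_subtopology[of extended_topology H H] topspace_T
    by (simp add: compact_space_def)
  have "compactin extended_topology (\<Union>(rcosets H))"
  proof (rule compactin_Union[OF assms(2)])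
    fix S assume "S \<in> rcosets H"
    then obtain a where a: "a \<in> carrier G" and S: "S = H #> a"
      by (auto simp: RCOSETS_def)
    have "S = (\<lambda>z. a \<otimes> z) ` H"
      unfolding S r_coset_def using a subgroup_subset m_comm by (auto simp: image_iff)
    then show "compactin extended_topology S"
      using image_compactin[OF compact_H continuous_map_translation[OF a]] by simp
  qed
  then show ?thesis
    using rcosets_part_G[OF subgroup_H]
    by (simp add: compact_space_def topspace_extended_topology)
qed

lemma Hausdorff_space_extended:
  assumes "Hausdorff_space T"
  shows "Hausdorff_space extended_topology"
  unfolding Hausdorff_space_def topspace_extended_topology
proof (intro allI impI)
  fix x y assume "x \<in> carrier G \<and> y \<in> carrier G \<and> x \<noteq> y"
  then have x: "x \<in> carrier G" and y: "y \<in> carrier G" and "x \<noteq> y"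
    by auto
  define h where "h = inv x \<otimes> y"
  have "x \<otimes> h = y"
    using x y by (simp add: h_def m_assoc[symmetric])
  then have h: "h \<in> carrier G" "h \<noteq> \<one>"
    using x y \<open>x \<noteq> y\<close> by (auto simp: h_def)
  obtain U V where UV: "openin extended_topology U" "openin extended_topology V"
      "\<one> \<in> U" "h \<in> V" "disjnt U V"
  proof (cases "h \<in> H")
    case True
    then show ?thesis
      using that assms one_in_H h topspace_T openin_extended_topology_if_openin_T
      unfolding Hausdorff_space_def by metis
  next
    case False
    have "openin extended_topology (carrier G - H)"
      using closedin_subgroup by (simp add: closedin_def topspace_extended_topology)
    then show ?thesis
      using that[of H "carrier G - H"] openin_subgroup one_in_H False h
      by (auto simp: disjnt_def)
  qed
  have translate: "continuous_map extended_topology extended_topology (\<lambda>z. inv x \<otimes> z)"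
    using continuous_map_translation x by simp
  show "\<exists>U V. openin extended_topology U \<and> openin extended_topology V \<and>
      x \<in> U \<and> y \<in> V \<and> disjnt U V"
  proof (intro exI conjI)
    show "openin extended_topology {z \<in> topspace extended_topology. inv x \<otimes> z \<in> U}"
         "openin extended_topology {z \<in> topspace extended_topology. inv x \<otimes> z \<in> V}"
      using translate UV(1,2) by (simp_all add: continuous_map_def)
    show "x \<in> {z \<in> topspace extended_topology. inv x \<otimes> z \<in> U}"
         "y \<in> {z \<in> topspace extended_topology. inv x \<otimes> z \<in> V}"
      using x y UV(3,4) by (simp_all add: topspace_extended_topology h_def)
    show "disjnt {z \<in> topspace extended_topology. inv x \<otimes> z \<in> U}
                 {z \<in> topspace extended_topology. inv x \<otimes> z \<in> V}"
      using UV(5) by (auto simp: disjnt_def)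
  qed
qed

lemma totally_disconnected_space_extended:
  assumes "totally_disconnected_space T"
  shows "totally_disconnected_space extended_topology"
  unfolding totally_disconnected_space_def
proof (intro allI impI)
  fix S assume S: "connectedin extended_topology S"
  show "\<exists>a. S \<subseteq> {a}"
  proof (cases "S = {}")
    case False
    then obtain x where xS: "x \<in> S"
      by auto
    have SG: "S \<subseteq> carrier G"
      using connectedin_subset_topspace[OF S] topspace_extended_topology by simp
    then have x: "x \<in> carrier G"
      using xS by auto
    define S' where "S' = (\<lambda>z. inv x \<otimes> z) ` S"
    have connected_S': "connectedin extended_topology S'"
      unfolding S'_def using x
      by (intro connectedin_continuous_map_image[OF continuous_map_translation S]) simp
    have "\<one> \<in> S'"
      using xS x unfolding S'_def by (auto intro!: image_eqI[of _ _ x])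
    then have "S' \<subseteq> H"
      using connectedin_clopen_cases[OF connected_S' closedin_subgroup openin_subgroup] one_in_H
      by (auto simp: disjnt_def)
    then have "connectedin T S'"
      using connected_S' subtopology_subgroup connectedin_subtopology[of extended_topology H S']
      by simp
    then obtain a where a: "S' \<subseteq> {a}"
      using assms unfolding totally_disconnected_space_def by blast
    have "z = x \<otimes> a" if "z \<in> S" for z
    proof -
      have "inv x \<otimes> z = a"
        using a that unfolding S'_def by auto
      then show ?thesis
        using x that SG by (auto simp: m_assoc[symmetric])
    qed
    then show ?thesis
      by blast
  qed simp
qed

end

theorem mainTheorem8:
  fixes G :: "('a, 'b) monoid_scheme" and H :: "'a set"
  assumes "comm_group G"
    and "subgroup H G"
    and "finite (rcosets\<^bsub>G\<^esub> H)"
    and "profinite_type (G\<lparr>carrier := H\<rparr>)"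
  shows "profinite_type G"
proof -
  obtain T where T: "topological_group (G\<lparr>carrier := H\<rparr>) T" "compact_space T"
      "Hausdorff_space T" "totally_disconnected_space T"
    using assms(4) unfolding profinite_type_def by blast
  interpret subgroup_topology_extension G H T
    using assms(1,2) T(1)
    by (simp add: subgroup_topology_extension_def subgroup_topology_extension_axioms_def)
  show ?thesis
    unfolding profinite_type_def
    using topological_group_extended compact_space_extended[OF T(2) assms(3)]
      Hausdorff_space_extended[OF T(3)] totally_disconnected_space_extended[OF T(4)]
    by blast
qed

end
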